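(* Let $n\geq2$. There exists at least one homogeneous harmonic polynomial $h$ of degree three on $\mathbb{R}^{n+1}$ which is $(n+2)$-symmetric and satisfies $\int_{B_1}h(y)\,dy=0$.
   Context: Fix $n+2$ points $q_1,\dots,q_{n+2}\in\mathbb{S}^n\subset\mathbb{R}^{n+1}$ spread evenly on $\mathbb{S}^n$ (vertices of an inscribed regular simplex). $\mathcal{S}_{n+2}(q)$ is the set of rotations $\phi\in SO(n+1)$ mapping $\{q_1,\dots,q_{n+2}\}$ onto itself; $h$ is $(n+2)$-symmetric if $h\circ\phi=h$ for all $\phi\in\mathcal{S}_{n+2}(q)$. $B_1$ is the unit ball of $\mathbb{R}^{n+1}$. *)

theory Defs
  imports "HOL-Analysis.Analysis"
begin

text \<open>Homogeneous polynomials of degree three on the Euclidean space indexed by the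
finite type 'n (i.e. R^(n+1) with n+1 = CARD('n)): explicit cubic forms.\<close>
definition homog_poly3 :: "(real^'n \<Rightarrow> real) \<Rightarrow> bool" where
  "homog_poly3 h \<longleftrightarrow> (\<exists>c :: 'n \<Rightarrow> 'n \<Rightarrow> 'n \<Rightarrow> real.
      \<forall>x. h x = (\<Sum>i\<in>UNIV. \<Sum>j\<in>UNIV. \<Sum>k\<in>UNIV. c i j k * x$i * x$j * x$k))"

definition laplacian :: "(real^'n \<Rightarrow> real) \<Rightarrow> real^'n \<Rightarrow> real" where
  "laplacian f x = (\<Sum>i\<in>UNIV.
      deriv (\<lambda>s. deriv (\<lambda>t. f (x + t *\<^sub>R axis i 1)) s) 0)"

definition harmonic :: "(real^'n \<Rightarrow> real) \<Rightarrow> bool" where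
  "harmonic f \<longleftrightarrow> (\<forall>x. laplacian f x = 0)"

definition sym_rotations :: "(nat \<Rightarrow> real^'n) \<Rightarrow> (real^'n^'n) set" where
  "sym_rotations q = {A. orthogonal_matrix A \<and> det A = 1 \<and>
      (\<lambda>x. A *v x) ` (q ` {..<CARD('n)+1}) = q ` {..<CARD('n)+1}}"

definition symmetric_wrt :: "(nat \<Rightarrow> real^'n) \<Rightarrow> (real^'n \<Rightarrow> real) \<Rightarrow> bool" where
  "symmetric_wrt q h \<longleftrightarrow> (\<forall>A\<in>sym_rotations q. \<forall>x. h (A *v x) = h x)"

end

theory Submission
  imports Defs
begin

text \<open>Take \<open>h(y) = \<Sum>\<^sub>i (q\<^sub>i \<bullet> y)\<^sup>3\<close>. It is a cubic form, and the Laplacian of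
\<open>(p \<bullet> y)\<^sup>3\<close> is \<open>6 |p|\<^sup>2 (p \<bullet> y)\<close>, so \<open>\<Delta>h(y) = 6 (\<Sum>\<^sub>i q\<^sub>i) \<bullet> y = 0\<close> because the
vertices of a regular simplex centred at the origin sum to zero. Since \<open>h\<close> depends only on the
vertex set, every rotation permuting the vertices leaves it invariant. It is odd, hence has
mean zero on the ball. Finally, with \<open>N + 1\<close> vertices the inner products of distinct ones are
\<open>-1/N\<close>, so \<open>h(q\<^sub>0) = 1 + N (-1/N)\<^sup>3 \<noteq> 0\<close>.\<close>

definition sum_cubes_inner :: "'a::real_inner set \<Rightarrow> 'a \<Rightarrow> real" where
  "sum_cubes_inner P x = (\<Sum>p\<in>P. (p \<bullet> x)^3)"

lemma power3_sum_eq_triple_sum: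
  fixes a :: "'i \<Rightarrow> 'a::comm_semiring_1"
  shows "(\<Sum>i\<in>A. a i)^3 = (\<Sum>i\<in>A. \<Sum>j\<in>A. \<Sum>k\<in>A. a i * a j * a k)"
proof -
  have "(\<Sum>i\<in>A. a i)^3 = (\<Sum>i\<in>A. a i) * ((\<Sum>j\<in>A. a j) * (\<Sum>k\<in>A. a k))"
    by (simp only: power3_eq_cube mult.assoc)
  also have "\<dots> = (\<Sum>i\<in>A. \<Sum>j\<in>A. \<Sum>k\<in>A. a i * (a j * a k))"
    by (simp only: sum_product, simp only: sum_distrib_left)
  finally show ?thesis
    by (simp add: mult.assoc)
qed

lemma homog_poly3_sum_cubes_inner: "homog_poly3 (sum_cubes_inner (P :: (real^'n) set))"
proof -
  define c where "c i j k = (\<Sum>p\<in>P. p $ i * p $ j * p $ k)" for i j k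
  have "sum_cubes_inner P x = (\<Sum>i\<in>UNIV. \<Sum>j\<in>UNIV. \<Sum>k\<in>UNIV. c i j k * x$i * x$j * x$k)"
    for x
  proof -
    have "sum_cubes_inner P x = (\<Sum>p\<in>P. \<Sum>i\<in>UNIV. \<Sum>j\<in>UNIV. \<Sum>k\<in>UNIV.
        (p $ i * x $ i) * (p $ j * x $ j) * (p $ k * x $ k))"
      unfolding sum_cubes_inner_def inner_vec_def inner_real_def power3_sum_eq_triple_sum ..
    also have "\<dots> = (\<Sum>i\<in>UNIV. \<Sum>j\<in>UNIV. \<Sum>k\<in>UNIV. \<Sum>p\<in>P.
        (p $ i * x $ i) * (p $ j * x $ j) * (p $ k * x $ k))"
      by (subst sum.swap, intro sum.cong refl, subst sum.swap, intro sum.cong refl sum.swap)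
    also have "\<dots> = (\<Sum>i\<in>UNIV. \<Sum>j\<in>UNIV. \<Sum>k\<in>UNIV. c i j k * x$i * x$j * x$k)"
      unfolding c_def sum_distrib_right by (intro sum.cong refl) (simp add: ac_simps)
    finally show ?thesis .
  qed
  then show ?thesis
    unfolding homog_poly3_def by blast
qed

lemma second_deriv_sum_cubes_affine:
  fixes a b :: "'i \<Rightarrow> real"
  shows "deriv (\<lambda>s. deriv (\<lambda>t. \<Sum>k\<in>K. (a k + t * b k)^3) s) 0 = (\<Sum>k\<in>K. 6 * a k * (b k)^2)"
proof -
  have "((\<lambda>t. \<Sum>k\<in>K. (a k + t * b k)^3) has_real_derivative
      (\<Sum>k\<in>K. 3 * (a k + s * b k)^2 * b k)) (at s)" for s
    by (auto intro!: derivative_eq_intros simp: algebra_simps)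
  then have first: "deriv (\<lambda>t. \<Sum>k\<in>K. (a k + t * b k)^3) = (\<lambda>s. \<Sum>k\<in>K. 3 * (a k + s * b k)^2 * b k)"
    using DERIV_imp_deriv by blast
  have "((\<lambda>s. \<Sum>k\<in>K. 3 * (a k + s * b k)^2 * b k) has_real_derivative
      (\<Sum>k\<in>K. 6 * a k * (b k)^2)) (at 0)"
    by (auto intro!: derivative_eq_intros sum.cong simp: algebra_simps power2_eq_square)
  then show ?thesis
    unfolding first by (rule DERIV_imp_deriv)
qed

lemma laplacian_sum_cubes_inner:
  "laplacian (sum_cubes_inner P) x = 6 * (\<Sum>p\<in>P. (p \<bullet> p) * (p \<bullet> x))"
  for x :: "real^'n"
proof -
  have line: "(\<lambda>t. sum_cubes_inner P (x + t *\<^sub>R axis i 1)) = (\<lambda>t. \<Sum>p\<in>P. (p \<bullet> x + t * p $ i)^3)"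
    for i
    by (simp add: sum_cubes_inner_def inner_add_right inner_axis)
  have "laplacian (sum_cubes_inner P) x = (\<Sum>i\<in>UNIV. \<Sum>p\<in>P. 6 * (p \<bullet> x) * (p $ i)^2)"
    unfolding laplacian_def line second_deriv_sum_cubes_affine ..
  also have "\<dots> = (\<Sum>p\<in>P. 6 * (p \<bullet> x) * (\<Sum>i\<in>UNIV. (p $ i)^2))"
    by (subst sum.swap) (simp add: sum_distrib_left)
  also have "\<dots> = 6 * (\<Sum>p\<in>P. (p \<bullet> p) * (p \<bullet> x))"
    by (simp add: inner_vec_def power2_eq_square sum_distrib_left ac_simps)
  finally show ?thesis .
qed

lemma harmonic_sum_cubes_inner:
  fixes P :: "(real^'n) set"
  assumes "\<And>p. p \<in> P \<Longrightarrow> p \<bullet> p = 1" and "\<Sum>P = 0"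
  shows "harmonic (sum_cubes_inner P)"
  unfolding harmonic_def laplacian_sum_cubes_inner
  using assms by (simp add: inner_sum_left[symmetric])

lemma sum_cubes_inner_orthogonal_transformation:
  assumes f: "orthogonal_transformation f" and "f ` P = P"
  shows "sum_cubes_inner P (f x) = sum_cubes_inner P x"
proof -
  have "sum_cubes_inner P (f x) = (\<Sum>p\<in>f ` P. (p \<bullet> f x)^3)"
    unfolding sum_cubes_inner_def using \<open>f ` P = P\<close> by simp
  also have "\<dots> = (\<Sum>p\<in>P. (f p \<bullet> f x)^3)"
    using orthogonal_transformation_inj[OF f] by (simp add: sum.reindex inj_on_def)
  also have "\<dots> = sum_cubes_inner P x"
    using f unfolding orthogonal_transformation_def sum_cubes_inner_def by simp
  finally show ?thesis .
qed

lemma symmetric_wrt_sum_cubes_inner: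
  "symmetric_wrt q (sum_cubes_inner (q ` {..<CARD('n)+1}))"
  for q :: "nat \<Rightarrow> real^'n"
  unfolding symmetric_wrt_def
proof (intro ballI allI)
  fix A :: "real^'n^'n" and x :: "real^'n"
  assume "A \<in> sym_rotations q"
  then have A: "orthogonal_matrix A"
    and perm: "(\<lambda>x. A *v x) ` q ` {..<CARD('n)+1} = q ` {..<CARD('n)+1}"
    unfolding sym_rotations_def mem_Collect_eq by blast+
  have "orthogonal_transformation (\<lambda>x. A *v x)"
    using A by (simp add: orthogonal_transformation_matrix)
  then show "sum_cubes_inner (q ` {..<CARD('n)+1}) (A *v x) = sum_cubes_inner (q ` {..<CARD('n)+1}) x"
    using perm by (rule sum_cubes_inner_orthogonal_transformation)
qed

lemma integral_odd_function_eq_0: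
  fixes f :: "'a::euclidean_space \<Rightarrow> 'b::banach"
  assumes "bounded S" and S: "\<And>x. x \<in> S \<Longrightarrow> - x \<in> S"
    and odd: "\<And>x. x \<in> S \<Longrightarrow> f (- x) = - f x"
  shows "integral S f = 0"
proof -
  obtain a where box: "S \<subseteq> cbox (- a) a"
    using bounded_subset_cbox_symmetric[OF \<open>bounded S\<close>] by blast
  define g where "g x = (if x \<in> S then f x else 0)" for x
  have g_odd: "g (- x) = - g x" for x
    using S[of x] S[of "- x"] odd[of x] by (auto simp: g_def)
  have "integral (cbox (- a) a) g = integral (cbox (- a) (- (- a))) (\<lambda>x. g (- x))"
    by (rule integral_reflect[symmetric])
  also have "\<dots> = - integral (cbox (- a) a) g"
    by (simp add: g_odd)
  finally have box0: "integral (cbox (- a) a) g = 0"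
    by (metis eq_neg_iff_add_eq_0 scaleR_2 scaleR_eq_0_iff zero_neq_numeral)
  have "integral S f = integral UNIV g"
    unfolding g_def by (rule integral_restrict_UNIV[symmetric])
  also have "\<dots> = integral UNIV (\<lambda>x. if x \<in> cbox (- a) a then g x else 0)"
    using box by (intro arg_cong[where f="integral UNIV"]) (auto simp: g_def fun_eq_iff)
  also have "\<dots> = 0"
    by (simp add: integral_restrict_UNIV box0)
  finally show ?thesis .
qed

lemma sum_cubes_inner_minus: "sum_cubes_inner P (- x) = - sum_cubes_inner P x"
  by (simp add: sum_cubes_inner_def sum_negf)

locale inscribed_regular_simplex =
  fixes P :: "'a::real_inner set" and N :: nat
  assumes finite: "finite P" and card: "card P = N + 1" and N_pos: "N > 0"
    and unit: "\<And>p. p \<in> P \<Longrightarrow> p \<bullet> p = 1"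
    and inner_distinct: "\<And>p p'. p \<in> P \<Longrightarrow> p' \<in> P \<Longrightarrow> p \<noteq> p' \<Longrightarrow> p \<bullet> p' = - 1 / N"
begin

lemma sum_inner_vertex:
  fixes g :: "real \<Rightarrow> real"
  assumes "p \<in> P"
  shows "(\<Sum>p'\<in>P. g (p' \<bullet> p)) = g 1 + N * g (- 1 / N)"
proof -
  have "(\<Sum>p'\<in>P. g (p' \<bullet> p)) = g (p \<bullet> p) + (\<Sum>p'\<in>P - {p}. g (p' \<bullet> p))"
    using finite assms by (simp add: sum.remove)
  also have "(\<Sum>p'\<in>P - {p}. g (p' \<bullet> p)) = (\<Sum>p'\<in>P - {p}. g (- 1 / N))"
    using assms by (intro sum.cong) (auto simp: inner_distinct)
  finally show ?thesis
    using finite assms card by (simp add: unit)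
qed

lemma sum_vertices_eq_0: "\<Sum>P = 0"
proof -
  have "\<Sum>P \<bullet> \<Sum>P = (\<Sum>p\<in>P. \<Sum>p'\<in>P. p' \<bullet> p)"
    by (simp add: inner_sum_left inner_sum_right)
  also have "\<dots> = 0"
    using N_pos by (simp add: sum_inner_vertex[where g="\<lambda>t. t"])
  finally show ?thesis
    by simp
qed

lemma sum_cubes_inner_vertex: "sum_cubes_inner P p = 1 - 1 / real N ^ 2" if "p \<in> P"
  using sum_inner_vertex[OF that, of "\<lambda>t. t^3"] N_pos
  by (simp add: sum_cubes_inner_def inner_commute power2_eq_square power3_eq_cube)

end

lemma inscribed_regular_simplex_image:
  fixes q :: "nat \<Rightarrow> 'a::real_inner"
  assumes "N > 0"
    and unit: "\<forall>i<N+1. norm (q i) = 1"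
    and distinct: "\<forall>i<N+1. \<forall>j<N+1. i \<noteq> j \<longrightarrow> q i \<bullet> q j = - 1 / N"
  shows "inscribed_regular_simplex (q ` {..<N+1}) N"
proof -
  have q_unit: "q i \<bullet> q i = 1" if "i < N + 1" for i
    using unit that by (simp add: dot_square_norm)
  have "inj_on q {..<N+1}"
  proof (rule inj_onI)
    fix i j
    assume ij: "i \<in> {..<N+1}" "j \<in> {..<N+1}" and "q i = q j"
    show "i = j"
    proof (rule ccontr)
      assume "i \<noteq> j"
      with ij distinct have "q i \<bullet> q j < 0"
        using \<open>N > 0\<close> by simp
      with q_unit[of i] ij \<open>q i = q j\<close> show False
        by simp
    qed
  qed
  then show ?thesis
    using \<open>N > 0\<close> q_unit distinct
    by unfold_locales (auto simp: card_image)
qed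

theorem lemma8p1:
  fixes q :: "nat \<Rightarrow> real^'n"
  assumes "CARD('n) \<ge> 3"
    and "\<forall>i<CARD('n)+1. norm (q i) = 1"
    and "\<forall>i<CARD('n)+1. \<forall>j<CARD('n)+1. i \<noteq> j \<longrightarrow> q i \<bullet> q j = - 1 / real CARD('n)"
  shows "\<exists>h :: real^'n \<Rightarrow> real. homog_poly3 h \<and> harmonic h \<and> h \<noteq> (\<lambda>x. 0)
           \<and> symmetric_wrt q h \<and> integral (ball 0 1) h = 0"
proof -
  define N where "N = CARD('n)"
  define P where "P = q ` {..<N+1}"
  have "N \<ge> 3"
    using assms(1) by (simp add: N_def)
  interpret inscribed_regular_simplex P N
    unfolding P_def using \<open>N \<ge> 3\<close> assms(2,3)
    by (intro inscribed_regular_simplex_image) (simp_all add: N_def)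
  have "sum_cubes_inner P (q 0) = 1 - 1 / real N ^ 2"
    by (rule sum_cubes_inner_vertex) (simp add: P_def)
  moreover have "1 / real N ^ 2 < 1"
    using \<open>N \<ge> 3\<close> by simp
  ultimately have "sum_cubes_inner P \<noteq> (\<lambda>x. 0)"
    by (metis less_irrefl diff_gt_0_iff_gt)
  moreover have "integral (ball 0 1) (sum_cubes_inner P) = 0"
    by (rule integral_odd_function_eq_0) (auto simp: sum_cubes_inner_minus)
  moreover have "symmetric_wrt q (sum_cubes_inner P)"
    unfolding P_def N_def by (rule symmetric_wrt_sum_cubes_inner)
  ultimately show ?thesis
    using homog_poly3_sum_cubes_inner harmonic_sum_cubes_inner[OF unit sum_vertices_eq_0]
    by blast
qed

end
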